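(* For every finite bipartite separated graph $(E,C)$, the canonical partial action $\theta^{(E,C)}\colon\mathbb F(E^1)\curvearrowright\Omega(E,C)$ is relatively strongly topologically free.
   Context: Separated graph $(E,C)$: $E=(E^0,E^1,r,s)$, $C=\bigsqcup_vC_v$ with $C_v$ a partition of $r^{-1}(v)$ into non-empty sets. Finite bipartite: $E$ finite, $E^0=E^{0,0}\sqcup E^{0,1}$, $s(E^1)=E^{0,1}$, $r(E^1)=E^{0,0}$. $\mathbb F$ = free group on $E^1$; for $\xi\subseteq\mathbb F$, $\alpha\in\xi$, $\xi_\alpha=\{\sigma\in E^1\sqcup(E^1)^{-1}:\sigma\alpha\in\xi\}$. $\Omega(E,C)$ is the set of $\xi\subseteq\mathbb F$ with $1\in\xi$, right-convex (if a reduced word $e_m^{\varepsilon_m}\cdots e_1^{\varepsilon_1}\in\xi$ then $e_k^{\varepsilon_k}\cdots e_1^{\varepsilon_1}\in\xi$ for all $k<m$), and such that for every $\alpha\in\xi$ either $\xi_\alpha=s^{-1}(v)$ for some $v\in E^{0,1}$ or $\xi_\alpha=\{e_X^{-1}:X\in C_v\}$ for some $v\in E^{0,0}$ and $e_X\in X$; topology from $\{0,1\}^{\mathbb F}$. $\theta^{(E,C)}$ has domains $\Omega(E,C)_\alpha=\{\xi:\alpha^{-1}\in\xi\}$ and $\theta_\alpha(\xi)=\xi\alpha^{-1}$. For a partial action $\theta\colon G\curvearrowright\Omega$ with $\Omega_g$ the domain of $\theta_{g^{-1}}$: $\mathrm{Stab}(x)=\{g:x\in\Omega_{g^{-1}},\theta_g(x)=x\}$;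 $\theta$ is topologically free in $x$ if for every $1\ne g\in\mathrm{Stab}(x)$ and open $U\ni x$ there is $y\in U$ with $g\notin\mathrm{Stab}(y)$; strongly topologically free in $x$ if for all $1\ne g_1,\dots,g_n\in\mathrm{Stab}(x)$ and open $U\ni x$ there is $y\in U$ with $g_1,\dots,g_n\notin\mathrm{Stab}(y)$; $\Omega^{\mathrm{TF}}$ is the set of points of topological freeness; $\theta$ is relatively strongly topologically free if it is strongly topologically free in every point of $\Omega^{\mathrm{TF}}$. *)

theory Defs
  imports "HOL-Analysis.Analysis"
begin

text \<open>A letter is a pair (e, True) standing for e, or (e, False) standing for e^-1.
  A word [x1, ..., xm] stands for the product x1 x2 ... xm (x1 leftmost).\<close>

type_synonym 'e letter = "'e \<times> bool"
type_synonym 'e word = "'e letter list"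

definition linv :: "'e letter \<Rightarrow> 'e letter" where
  "linv x = (fst x, \<not> snd x)"

fun reduced :: "'e word \<Rightarrow> bool" where
  "reduced [] = True"
| "reduced [x] = True"
| "reduced (x # y # w) = (y \<noteq> linv x \<and> reduced (y # w))"

definition red_cons :: "'e letter \<Rightarrow> 'e word \<Rightarrow> 'e word" where
  "red_cons x w = (case w of [] \<Rightarrow> [x] | y # w' \<Rightarrow> (if y = linv x then w' else x # w))"

definition reduce :: "'e word \<Rightarrow> 'e word" where
  "reduce w = foldr red_cons w []"

definition wmult :: "'e word \<Rightarrow> 'e word \<Rightarrow> 'e word" where
  "wmult a b = reduce (a @ b)"

definition winv :: "'e word \<Rightarrow> 'e word" where
  "winv w = rev (map linv w)"

definition free_group :: "'e set \<Rightarrow> 'e word set" where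
  "free_group E1 = {w. reduced w \<and> set (map fst w) \<subseteq> E1}"

definition letters :: "'e set \<Rightarrow> 'e letter set" where
  "letters E1 = E1 \<times> UNIV"

definition separated_graph ::
  "'v set \<Rightarrow> 'e set \<Rightarrow> ('e \<Rightarrow> 'v) \<Rightarrow> ('e \<Rightarrow> 'v) \<Rightarrow> ('v \<Rightarrow> 'e set set) \<Rightarrow> bool" where
  "separated_graph E0 E1 r s C \<longleftrightarrow>
     r ` E1 \<subseteq> E0 \<and> s ` E1 \<subseteq> E0 \<and>
     (\<forall>v. v \<notin> E0 \<longrightarrow> C v = {}) \<and>
     (\<forall>v\<in>E0. (\<forall>X\<in>C v. X \<noteq> {}) \<and> \<Union>(C v) = {e\<in>E1. r e = v} \<and>
        (\<forall>X\<in>C v. \<forall>Y\<in>C v. X \<noteq> Y \<longrightarrow> X \<inter> Y = {}))"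

definition finite_bipartite_sep_graph ::
  "'v set \<Rightarrow> 'v set \<Rightarrow> 'v set \<Rightarrow> 'e set \<Rightarrow> ('e \<Rightarrow> 'v) \<Rightarrow> ('e \<Rightarrow> 'v) \<Rightarrow> ('v \<Rightarrow> 'e set set) \<Rightarrow> bool" where
  "finite_bipartite_sep_graph E0 E00 E01 E1 r s C \<longleftrightarrow>
     separated_graph E0 E1 r s C \<and> finite E0 \<and> finite E1 \<and>
     E0 = E00 \<union> E01 \<and> E00 \<inter> E01 = {} \<and> s ` E1 = E01 \<and> r ` E1 = E00"

definition local_config :: "'e set \<Rightarrow> 'e word set \<Rightarrow> 'e word \<Rightarrow> 'e letter set" where
  "local_config E1 \<xi> \<alpha> = {\<sigma> \<in> letters E1. wmult [\<sigma>] \<alpha> \<in> \<xi>}"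

definition Omega ::
  "'v set \<Rightarrow> 'v set \<Rightarrow> 'e set \<Rightarrow> ('e \<Rightarrow> 'v) \<Rightarrow> ('e \<Rightarrow> 'v) \<Rightarrow> ('v \<Rightarrow> 'e set set) \<Rightarrow> 'e word set set" where
  "Omega E00 E01 E1 r s C = {\<xi>. \<xi> \<subseteq> free_group E1 \<and> [] \<in> \<xi> \<and>
     (\<forall>w\<in>\<xi>. \<forall>k. drop k w \<in> \<xi>) \<and>
     (\<forall>\<alpha>\<in>\<xi>. (\<exists>v\<in>E01. local_config E1 \<xi> \<alpha> = {(e, True) | e. e \<in> E1 \<and> s e = v}) \<or>
              (\<exists>v\<in>E00. \<exists>ch. (\<forall>X\<in>C v. ch X \<in> X) \<and>
                   local_config E1 \<xi> \<alpha> = (\<lambda>X. (ch X, False)) ` C v))}"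

definition Omega_top ::
  "'v set \<Rightarrow> 'v set \<Rightarrow> 'e set \<Rightarrow> ('e \<Rightarrow> 'v) \<Rightarrow> ('e \<Rightarrow> 'v) \<Rightarrow> ('v \<Rightarrow> 'e set set) \<Rightarrow> 'e word set topology" where
  "Omega_top E00 E01 E1 r s C =
     pullback_topology (Omega E00 E01 E1 r s C) (\<lambda>\<xi>. restrict (\<lambda>w. w \<in> \<xi>) (free_group E1))
       (product_topology (\<lambda>_. discrete_topology (UNIV :: bool set)) (free_group E1))"

text \<open>theta_alpha has domain {xi. alpha in xi} (= Omega_{alpha^-1}) and sends xi to xi alpha^-1.\<close>
definition theta_dom ::
  "'v set \<Rightarrow> 'v set \<Rightarrow> 'e set \<Rightarrow> ('e \<Rightarrow> 'v) \<Rightarrow> ('e \<Rightarrow> 'v) \<Rightarrow> ('v \<Rightarrow> 'e set set) \<Rightarrow> 'e word \<Rightarrow> 'e word set set" where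
  "theta_dom E00 E01 E1 r s C \<alpha> = {\<xi> \<in> Omega E00 E01 E1 r s C. \<alpha> \<in> \<xi>}"

definition theta :: "'e word \<Rightarrow> 'e word set \<Rightarrow> 'e word set" where
  "theta \<alpha> \<xi> = (\<lambda>\<beta>. wmult \<beta> (winv \<alpha>)) ` \<xi>"

text \<open>A partial action of the group with elements G and unit one on a space with topology T,
  given by maps act g with domain dm g (i.e. dm g is Omega_{g^-1}).\<close>

definition Stab :: "('g \<Rightarrow> 'x set) \<Rightarrow> ('g \<Rightarrow> 'x \<Rightarrow> 'x) \<Rightarrow> 'g set \<Rightarrow> 'x \<Rightarrow> 'g set" where
  "Stab dm act G x = {g \<in> G. x \<in> dm g \<and> act g x = x}"

definition top_free_at ::
  "'x topology \<Rightarrow> ('g \<Rightarrow> 'x set) \<Rightarrow> ('g \<Rightarrow> 'x \<Rightarrow> 'x) \<Rightarrow> 'g set \<Rightarrow> 'g \<Rightarrow> 'x \<Rightarrow> bool" where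
  "top_free_at T dm act G one x \<longleftrightarrow>
     (\<forall>g \<in> Stab dm act G x. g \<noteq> one \<longrightarrow>
        (\<forall>U. openin T U \<and> x \<in> U \<longrightarrow> (\<exists>y\<in>U. g \<notin> Stab dm act G y)))"

definition strongly_top_free_at ::
  "'x topology \<Rightarrow> ('g \<Rightarrow> 'x set) \<Rightarrow> ('g \<Rightarrow> 'x \<Rightarrow> 'x) \<Rightarrow> 'g set \<Rightarrow> 'g \<Rightarrow> 'x \<Rightarrow> bool" where
  "strongly_top_free_at T dm act G one x \<longleftrightarrow>
     (\<forall>gs. finite gs \<and> gs \<subseteq> Stab dm act G x \<and> one \<notin> gs \<longrightarrow>
        (\<forall>U. openin T U \<and> x \<in> U \<longrightarrow> (\<exists>y\<in>U. gs \<inter> Stab dm act G y = {})))"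

definition TF_points ::
  "'x topology \<Rightarrow> ('g \<Rightarrow> 'x set) \<Rightarrow> ('g \<Rightarrow> 'x \<Rightarrow> 'x) \<Rightarrow> 'g set \<Rightarrow> 'g \<Rightarrow> 'x set" where
  "TF_points T dm act G one = {x \<in> topspace T. top_free_at T dm act G one x}"

definition rel_strongly_top_free ::
  "'x topology \<Rightarrow> ('g \<Rightarrow> 'x set) \<Rightarrow> ('g \<Rightarrow> 'x \<Rightarrow> 'x) \<Rightarrow> 'g set \<Rightarrow> 'g \<Rightarrow> bool" where
  "rel_strongly_top_free T dm act G one \<longleftrightarrow>
     (\<forall>x \<in> TF_points T dm act G one. strongly_top_free_at T dm act G one x)"

end

theory Submission
  imports Defs
begin

text \<open>Let \<open>\<xi>\<close> be a point of topological freeness, \<open>g\<^sub>1, \<dots>, g\<^sub>n\<close> non-trivial elements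
  fixing it, and \<open>U\<close> a neighbourhood of \<open>\<xi>\<close>. Shrink \<open>U\<close> to a cylinder that also prescribes
  membership of all words of length at most \<open>M > |g\<^sub>i|\<close>; topological freeness yields a point
  \<open>y \<noteq> \<xi>\<close> in it. If \<open>d\<close> is a shortest word on which \<open>y\<close> and \<open>\<xi>\<close> differ and \<open>B\<close> is \<open>d\<close>
  without its first letter, then the configuration \<open>y'\<close> which agrees with \<open>y\<close> on the cone of
  words ending in \<open>B\<close> and with \<open>\<xi>\<close> elsewhere is again in \<open>\<Omega>(E,C)\<close> and lies in the cylinder.
  No \<open>g\<^sub>i\<close> can fix \<open>y'\<close>: otherwise the symmetric difference of \<open>y'\<close> and \<open>\<xi>\<close> would be a
  non-empty set inside that cone, invariant under right multiplication by \<open>g\<^sub>i\<^sup>\<plusminus>\<^sup>1\<close>, and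
  multiplying a shortest element of it by \<open>g\<^sub>i\<close> or \<open>g\<^sub>i\<^sup>-\<^sup>1\<close> would produce a shorter one,
  since \<open>|g\<^sub>i| < |B|\<close>.\<close>

subsection \<open>Reduced words\<close>

lemma linv_linv [simp]: "linv (linv x) = x"
  by (simp add: linv_def)

lemma linv_eq_iff: "linv x = y \<longleftrightarrow> x = linv y"
  by (auto simp: linv_def)

lemma reduced_Cons_iff: "reduced (x # w) \<longleftrightarrow> reduced w \<and> (w = [] \<or> hd w \<noteq> linv x)"
  by (cases w) auto

lemma reduced_append:
  "reduced (a @ b) \<longleftrightarrow> reduced a \<and> reduced b \<and> (a = [] \<or> b = [] \<or> hd b \<noteq> linv (last a))"
proof (induction a)
  case (Cons x a)
  then show ?case by (cases a; cases b) (auto simp: reduced_Cons_iff)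
qed simp

lemma red_cons_cases: "red_cons x w = x # w \<or> (w \<noteq> [] \<and> red_cons x w = tl w)"
  by (cases w) (auto simp: red_cons_def)

lemma red_cons_reduced: "reduced (x # w) \<Longrightarrow> red_cons x w = x # w"
  by (cases w) (auto simp: red_cons_def)

lemma reduced_red_cons: "reduced w \<Longrightarrow> reduced (red_cons x w)"
  by (cases w) (auto simp: red_cons_def reduced_Cons_iff)

lemma red_cons_linv_cancel: "reduced w \<Longrightarrow> red_cons x (red_cons (linv x) w) = w"
  by (cases w) (auto simp: red_cons_def reduced_Cons_iff split: list.splits)

lemma length_red_cons: "length (red_cons x w) \<le> Suc (length w)"
  by (cases w) (auto simp: red_cons_def)

lemma reduce_Nil [simp]: "reduce [] = []"
  by (simp add: reduce_def)

lemma reduce_Cons: "reduce (x # w) = red_cons x (reduce w)"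
  by (simp add: reduce_def)

lemma reduce_append: "reduce (a @ b) = foldr red_cons a (reduce b)"
  by (simp add: reduce_def)

lemma reduced_foldr_red_cons: "reduced w \<Longrightarrow> reduced (foldr red_cons a w)"
  by (induction a) (auto simp: reduced_red_cons)

lemma reduced_reduce: "reduced (reduce w)"
  using reduced_foldr_red_cons[of "[]" w] by (simp add: reduce_def)

lemma reduce_reduced: "reduced w \<Longrightarrow> reduce w = w"
  by (induction w) (auto simp: reduce_Cons reduced_Cons_iff red_cons_reduced)

lemma length_reduce: "length (reduce w) \<le> length w"
proof (induction w)
  case (Cons x w)
  then show ?case using length_red_cons[of x "reduce w"] by (simp add: reduce_Cons)
qed simp

lemma foldr_red_cons_red_cons:
  assumes "reduced w"
  shows "foldr red_cons (red_cons x a) w = red_cons x (foldr red_cons a w)"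
proof (cases "a \<noteq> [] \<and> hd a = linv x")
  case True
  then obtain a' where "a = linv x # a'" by (cases a) auto
  then show ?thesis
    using red_cons_linv_cancel[OF reduced_foldr_red_cons[OF assms]] by (simp add: red_cons_def)
next
  case False
  then have "red_cons x a = x # a" by (cases a) (auto simp: red_cons_def)
  then show ?thesis by simp
qed

lemma foldr_red_cons_reduce: "reduced w \<Longrightarrow> foldr red_cons (reduce a) w = foldr red_cons a w"
  by (induction a) (auto simp: reduce_Cons foldr_red_cons_red_cons)

lemma reduce_reduce_append: "reduce (reduce a @ b) = reduce (a @ b)"
  by (simp add: reduce_append foldr_red_cons_reduce reduced_reduce)

lemma reduce_append_reduce: "reduce (a @ reduce b) = reduce (a @ b)"
  by (simp add: reduce_append reduce_reduced reduced_reduce)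

lemma winv_Nil [simp]: "winv [] = []"
  by (simp add: winv_def)

lemma winv_Cons: "winv (x # w) = winv w @ [linv x]"
  by (simp add: winv_def)

lemma winv_append: "winv (a @ b) = winv b @ winv a"
  by (simp add: winv_def)

lemma winv_winv [simp]: "winv (winv a) = a"
  by (induction a) (simp_all add: winv_def)

lemma winv_eq_Nil_iff [simp]: "winv a = [] \<longleftrightarrow> a = []"
  by (simp add: winv_def)

lemma length_winv [simp]: "length (winv a) = length a"
  by (simp add: winv_def)

lemma reduced_winv: "reduced w \<Longrightarrow> reduced (winv w)"
proof (induction w)
  case (Cons x w)
  then show ?case
    by (auto simp: winv_Cons reduced_append reduced_Cons_iff winv_def last_rev hd_map linv_eq_iff)
qed simp

lemma reduce_append_winv: "reduce (w @ winv w) = []"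
proof (induction w)
  case (Cons x w)
  have "reduce (w @ winv w @ [linv x]) = reduce (reduce (w @ winv w) @ [linv x])"
    by (simp add: reduce_reduce_append)
  also have "\<dots> = [linv x]"
    using Cons by (simp add: reduce_Cons red_cons_def)
  finally show ?case by (simp add: winv_Cons reduce_Cons red_cons_def)
qed simp

lemma reduce_winv_append: "reduce (winv w @ w) = []"
  using reduce_append_winv[of "winv w"] by simp

lemma reduce_cancel_middle: "reduce (a @ p @ winv p @ b) = reduce (a @ b)"
proof -
  have "reduce (p @ winv p @ b) = reduce b"
    using reduce_reduce_append[of "p @ winv p" b] by (simp add: reduce_append_winv)
  then show ?thesis by (metis reduce_append_reduce)
qed

lemma wmult_wmult_winv: "reduced x \<Longrightarrow> wmult (wmult x p) (winv p) = x"
  using reduce_cancel_middle[of x p "[]"]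
  by (simp add: wmult_def reduce_reduce_append reduce_reduced)

lemma wmult_Cons_reduced: "reduced a \<Longrightarrow> wmult [x] a = red_cons x a"
  by (simp add: wmult_def reduce_Cons reduce_reduced)

lemma foldr_red_cons_decomp:
  assumes "reduced b" and "reduced a"
  shows "\<exists>a' p q. a = a' @ p \<and> b = winv p @ q \<and> foldr red_cons a b = a' @ q"
  using assms(2)
proof (induction a)
  case Nil
  show ?case by (intro exI[of _ "[]"] exI[of _ "[]"] exI[of _ b]) simp
next
  case (Cons x a)
  then obtain a' p q where
    h: "a = a' @ p" "b = winv p @ q" "foldr red_cons a b = a' @ q"
    by (auto simp: reduced_Cons_iff)
  show ?case
  proof (cases a')
    case (Cons y a'')
    then have "y \<noteq> linv x" using Cons.prems h(1) by (simp add: reduced_Cons_iff)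
    then have "red_cons x (a' @ q) = x # a' @ q"
      using Cons by (simp add: red_cons_def linv_eq_iff)
    then show ?thesis using h by (intro exI[of _ "x # a'"] exI[of _ p] exI[of _ q]) simp
  next
    case Nil
    show ?thesis
    proof (cases "q \<noteq> [] \<and> hd q = linv x")
      case True
      then obtain q' where q: "q = linv x # q'" by (cases q) auto
      then have "foldr red_cons (x # a) b = q'" "b = winv (x # p) @ q'"
        using h Nil by (simp_all add: red_cons_def winv_Cons)
      then show ?thesis using h Nil
        by (intro exI[of _ "[]"] exI[of _ "x # p"] exI[of _ q']) simp
    next
      case False
      then have "red_cons x q = x # q" by (cases q) (auto simp: red_cons_def)
      then show ?thesis using h Nil by (intro exI[of _ "[x]"] exI[of _ p] exI[of _ q]) simp
    qed
  qed
qed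

lemma wmult_decomp:
  assumes "reduced a" and "reduced b"
  obtains a' p q where "a = a' @ p" "b = winv p @ q" "wmult a b = a' @ q"
proof -
  have "wmult a b = foldr red_cons a b"
    using assms(2) by (simp add: wmult_def reduce_append reduce_reduced)
  then show ?thesis using foldr_red_cons_decomp[OF assms(2,1)] that by metis
qed

text \<open>Write \<open>x = x' p\<close>, \<open>h = p\<^sup>-\<^sup>1 q\<close>, \<open>x h = x' q\<close>. If \<open>|p| \<le> |q|\<close>, then \<open>q\<close>, being a suffix of
  \<open>B\<close> and hence of \<open>x\<close>, has the form \<open>r p\<close>, and \<open>x h\<^sup>-\<^sup>1 = x' p p\<^sup>-\<^sup>1 r\<^sup>-\<^sup>1 p\<close> cancels \<open>r\<close>.\<close>

lemma wmult_shorter_if_common_suffix: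
  assumes rx: "reduced x" and rh: "reduced h" and hn: "h \<noteq> []"
    and x: "x = u @ B" and xh: "wmult x h = v @ B" and hB: "length h < length B"
  shows "length (wmult x h) < length x \<or> length (wmult x (winv h)) < length x"
proof (rule ccontr)
  assume "\<not> ?thesis"
  then have l1: "length x \<le> length (wmult x h)" and l2: "length x \<le> length (wmult x (winv h))"
    by auto
  obtain x' p q where d: "x = x' @ p" "h = winv p @ q" "wmult x h = x' @ q"
    using wmult_decomp[OF rx rh] .
  have lpq: "length p \<le> length q" using l1 d by simp
  have qB: "length q \<le> length B" using hB d by simp
  have "drop (length x - length q) x = drop (length B - length q) B"
    using qB x by (simp add: drop_append)
  also have "\<dots> = drop (length (wmult x h) - length q) (wmult x h)"
    using qB xh by (simp add: drop_append)
  also have "\<dots> = q" using d by simp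
  finally have q_suffix: "drop (length x - length q) x = q" .
  define t where "t = length q - length p"
  have "length (x' @ p) = length (u @ B)" using d(1) x by simp
  then have tx: "t \<le> length x'" using hB d(2) by (simp add: t_def)
  define r where "r = drop (length x' - t) x'"
  define x'' where "x'' = take (length x' - t) x'"
  have x': "x' = x'' @ r" and lr: "length r = t"
    using tx by (simp_all add: r_def x''_def)
  have q: "q = r @ p"
    using q_suffix d(1) tx lpq by (simp add: r_def t_def drop_append)
  show False
  proof (cases "t = 0")
    case True
    then have "reduce h = []" using d q lr by (simp add: reduce_winv_append)
    with rh hn show False by (simp add: reduce_reduced)
  next
    case False
    have "wmult x (winv h) = reduce (x'' @ r @ (p @ winv p @ winv r @ p))"
      using d x' q by (simp add: wmult_def winv_append)
    also have "\<dots> = reduce (x'' @ r @ winv r @ p)"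
      using reduce_cancel_middle[of "x'' @ r"] by simp
    also have "\<dots> = reduce (x'' @ p)" by (rule reduce_cancel_middle)
    finally have "length (wmult x (winv h)) \<le> length (x'' @ p)"
      using length_reduce by metis
    then show False using l2 d x' lr False by simp
  qed
qed

subsection \<open>Configurations invariant under right multiplication\<close>

definition cone :: "'e word \<Rightarrow> 'e word set" where
  "cone B = {w. \<exists>u. w = u @ B}"

lemma theta_fixed_closed:
  assumes "reduced g" and "\<forall>w\<in>S. reduced w" and "theta g S = S" and "x \<in> S"
  shows "wmult x (winv g) \<in> S" and "wmult x g \<in> S"
proof -
  show "wmult x (winv g) \<in> S" using assms(3,4) by (auto simp: theta_def)
  from assms(3,4) obtain z where z: "z \<in> S" "x = wmult z (winv g)"
    by (auto simp: theta_def)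
  then have "wmult x g = z"
    using assms(2) wmult_wmult_winv[of z "winv g"] by simp
  then show "wmult x g \<in> S" using z by simp
qed

lemma theta_fixed_eq_if_sym_diff_in_cone:
  assumes red: "\<forall>w\<in>S1 \<union> S2. reduced w"
    and fix1: "theta g S1 = S1" and fix2: "theta g S2 = S2"
    and cone: "(S1 - S2) \<union> (S2 - S1) \<subseteq> cone B"
    and rg: "reduced g" and gn: "g \<noteq> []" and gB: "length g < length B"
  shows "S1 = S2"
proof (rule ccontr)
  define D where "D = (S1 - S2) \<union> (S2 - S1)"
  assume "S1 \<noteq> S2"
  then obtain x0 where "x0 \<in> D" by (auto simp: D_def)
  then obtain x where x: "x \<in> D" and xmin: "\<And>z. z \<in> D \<Longrightarrow> length x \<le> length z"
    using ex_has_least_nat[of "\<lambda>z. z \<in> D" x0 length] by blast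
  have rx: "reduced x" using x red by (auto simp: D_def)
  have closed1: "\<And>z. z \<in> S1 \<Longrightarrow> wmult z (winv g) \<in> S1 \<and> wmult z g \<in> S1"
    and closed2: "\<And>z. z \<in> S2 \<Longrightarrow> wmult z (winv g) \<in> S2 \<and> wmult z g \<in> S2"
    using theta_fixed_closed[OF rg] fix1 fix2 red by auto
  have inverse: "wmult (wmult x (winv g)) g = x" "wmult (wmult x g) (winv g) = x"
    using wmult_wmult_winv[OF rx, of "winv g"] wmult_wmult_winv[OF rx, of g] by auto
  have xg': "wmult x (winv g) \<in> D" and xg: "wmult x g \<in> D"
    using x closed1 closed2 inverse unfolding D_def by (metis DiffE DiffI UnE UnI1 UnI2)+
  obtain u where u: "x = u @ B" using x cone by (auto simp: D_def cone_def)
  obtain v where v: "wmult x (winv g) = v @ B" using xg' cone by (auto simp: D_def cone_def)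
  have "length (wmult x (winv g)) < length x \<or> length (wmult x g) < length x"
    using wmult_shorter_if_common_suffix[OF rx reduced_winv[OF rg] _ u v] gn gB by simp
  then show False using xmin[OF xg'] xmin[OF xg] by linarith
qed

lemma Stab_theta_disjoint_if_sym_diff_in_cone:
  assumes "\<forall>w\<in>\<eta> \<union> \<xi>. reduced w" and "\<eta> \<noteq> \<xi>" and "(\<eta> - \<xi>) \<union> (\<xi> - \<eta>) \<subseteq> cone B"
    and "g \<in> Stab dm theta G \<xi>" and "reduced g" and "g \<noteq> []" and "length g < length B"
  shows "g \<notin> Stab dm theta G \<eta>"
  using theta_fixed_eq_if_sym_diff_in_cone[of \<eta> \<xi> g B] assms by (auto simp: Stab_def)

lemma red_cons_leaves_cone:
  assumes "\<alpha> \<in> cone B" and "red_cons x \<alpha> \<notin> cone B"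
  shows "red_cons x \<alpha> = tl B"
proof -
  obtain u where u: "\<alpha> = u @ B" using assms(1) by (auto simp: cone_def)
  have "x # \<alpha> \<in> cone B" using u by (auto simp: cone_def intro: exI[of _ "x # u"])
  then have tl: "red_cons x \<alpha> = tl \<alpha>" using assms(2) red_cons_cases[of x \<alpha>] by metis
  have "u = []"
  proof (rule ccontr)
    assume "u \<noteq> []"
    then have "tl \<alpha> = tl u @ B" using u by simp
    then show False using assms(2) tl by (auto simp: cone_def)
  qed
  then show ?thesis using u tl by simp
qed

lemma red_cons_enters_cone:
  assumes "\<alpha> \<notin> cone B" and "red_cons x \<alpha> \<in> cone B"
  shows "red_cons x \<alpha> = B"
proof -
  obtain u where u: "red_cons x \<alpha> = u @ B" using assms(2) by (auto simp: cone_def)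
  consider "red_cons x \<alpha> = x # \<alpha>" | "\<alpha> \<noteq> []" "red_cons x \<alpha> = tl \<alpha>"
    using red_cons_cases by blast
  then show ?thesis
  proof cases
    case 1
    then show ?thesis using u assms(1) by (cases u) (auto simp: cone_def)
  next
    case 2
    then have "\<alpha> = (hd \<alpha> # u) @ B" using u by simp
    then show ?thesis using assms(1) unfolding cone_def by blast
  qed
qed

subsection \<open>Splicing configurations along a cone\<close>

definition admissible_local_config ::
  "'v set \<Rightarrow> 'v set \<Rightarrow> 'e set \<Rightarrow> ('e \<Rightarrow> 'v) \<Rightarrow> ('v \<Rightarrow> 'e set set) \<Rightarrow> 'e letter set \<Rightarrow> bool" where
  "admissible_local_config E00 E01 E1 s C L \<longleftrightarrow>
     (\<exists>v\<in>E01. L = {(e, True) | e. e \<in> E1 \<and> s e = v}) \<or>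
     (\<exists>v\<in>E00. \<exists>ch. (\<forall>X\<in>C v. ch X \<in> X) \<and> L = (\<lambda>X. (ch X, False)) ` C v)"

lemma Omega_iff:
  "\<xi> \<in> Omega E00 E01 E1 r s C \<longleftrightarrow>
     \<xi> \<subseteq> free_group E1 \<and> [] \<in> \<xi> \<and> (\<forall>w\<in>\<xi>. \<forall>k. drop k w \<in> \<xi>) \<and>
     (\<forall>\<alpha>\<in>\<xi>. admissible_local_config E00 E01 E1 s C (local_config E1 \<xi> \<alpha>))"
  by (simp add: Omega_def admissible_local_config_def)

definition splice :: "'e word \<Rightarrow> 'e word set \<Rightarrow> 'e word set \<Rightarrow> 'e word set" where
  "splice B \<xi> y = (\<xi> - cone B) \<union> (y \<inter> cone B)"

lemma mem_splice: "w \<in> splice B \<xi> y \<longleftrightarrow> (if w \<in> cone B then w \<in> y else w \<in> \<xi>)"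
  by (auto simp: splice_def)

lemma drop_mem_splice:
  assumes "\<forall>w\<in>\<xi>. \<forall>k. drop k w \<in> \<xi>" and "\<forall>w\<in>y. \<forall>k. drop k w \<in> y"
    and "B \<in> \<xi>" and "B \<in> y" and "w \<in> splice B \<xi> y"
  shows "drop k w \<in> splice B \<xi> y"
proof (cases "w \<in> cone B")
  case True
  then obtain u where u: "w = u @ B" by (auto simp: cone_def)
  show ?thesis
  proof (cases "k \<le> length u")
    case True
    then have "drop k w \<in> cone B" using u by (auto simp: cone_def)
    then show ?thesis using assms(2,5) \<open>w \<in> cone B\<close> by (simp add: mem_splice)
  next
    case False
    then have "drop k w = drop (k - length u) B" using u by simp
    then show ?thesis using assms(1-4) by (simp add: mem_splice)
  qed
next
  case False
  have "drop k w \<notin> cone B"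
  proof
    assume "drop k w \<in> cone B"
    then obtain u where "drop k w = u @ B" by (auto simp: cone_def)
    then have "w = (take k w @ u) @ B" by (metis append_assoc append_take_drop_id)
    then show False using False unfolding cone_def by blast
  qed
  then show ?thesis using assms(1,5) False by (simp add: mem_splice)
qed

text \<open>Leaving or entering the cone along an edge only passes through \<open>B\<close> and \<open>tl B\<close>, on which
  both configurations agree; so the local configurations of the splice are those of \<open>y\<close> inside
  the cone and those of \<open>\<xi>\<close> outside it.\<close>

lemma local_config_splice:
  assumes "\<alpha> \<in> splice B \<xi> y" and "reduced \<alpha>"
    and "B \<in> \<xi>" and "B \<in> y" and "tl B \<in> \<xi>" and "tl B \<in> y"
  shows "local_config E1 (splice B \<xi> y) \<alpha> =
           (if \<alpha> \<in> cone B then local_config E1 y \<alpha> else local_config E1 \<xi> \<alpha>)"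
proof -
  have "red_cons x \<alpha> \<in> splice B \<xi> y \<longleftrightarrow>
          red_cons x \<alpha> \<in> (if \<alpha> \<in> cone B then y else \<xi>)" for x
    using red_cons_leaves_cone[of \<alpha> B x] red_cons_enters_cone[of \<alpha> B x] assms(3-6)
    by (auto simp: mem_splice)
  then show ?thesis
    by (simp add: local_config_def wmult_Cons_reduced[OF assms(2)])
qed

lemma splice_in_Omega:
  assumes \<xi>: "\<xi> \<in> Omega E00 E01 E1 r s C" and y: "y \<in> Omega E00 E01 E1 r s C"
    and B: "B \<in> \<xi>" "B \<in> y"
  shows "splice B \<xi> y \<in> Omega E00 E01 E1 r s C"
proof -
  have tlB: "tl B \<in> \<xi>" "tl B \<in> y"
    using \<xi> y B unfolding Omega_iff by (metis One_nat_def drop_0 drop_Suc)+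
  have sub: "splice B \<xi> y \<subseteq> free_group E1"
    using \<xi> y by (auto simp: Omega_iff splice_def)
  have "admissible_local_config E00 E01 E1 s C (local_config E1 (splice B \<xi> y) \<alpha>)"
    if \<alpha>: "\<alpha> \<in> splice B \<xi> y" for \<alpha>
  proof -
    have "reduced \<alpha>" using \<alpha> sub by (auto simp: free_group_def)
    then show ?thesis
      using local_config_splice[OF \<alpha> _ B tlB] \<alpha> \<xi> y by (auto simp: Omega_iff mem_splice)
  qed
  moreover have "[] \<in> splice B \<xi> y"
    using \<xi> y by (auto simp: Omega_iff mem_splice)
  ultimately show ?thesis
    using sub drop_mem_splice[of \<xi> y B] \<xi> y B by (auto simp: Omega_iff)
qed

lemma Omega_first_difference:
  assumes \<xi>: "\<xi> \<in> Omega E00 E01 E1 r s C" and y: "y \<in> Omega E00 E01 E1 r s C"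
    and "y \<noteq> \<xi>" and agree: "\<forall>w. length w \<le> M \<longrightarrow> (w \<in> y \<longleftrightarrow> w \<in> \<xi>)"
  obtains B where "M \<le> length B" "B \<in> \<xi>" "B \<in> y" "splice B \<xi> y \<noteq> \<xi>"
proof -
  define D where "D = (y - \<xi>) \<union> (\<xi> - y)"
  obtain d0 where "d0 \<in> D" using \<open>y \<noteq> \<xi>\<close> by (auto simp: D_def)
  then obtain d where d: "d \<in> D" and dmin: "\<And>z. z \<in> D \<Longrightarrow> length d \<le> length z"
    using ex_has_least_nat[of "\<lambda>z. z \<in> D" d0 length] by blast
  have "M < length d"
  proof (rule ccontr)
    assume "\<not> M < length d"
    then have "d \<in> y \<longleftrightarrow> d \<in> \<xi>" using agree by simp
    then show False using d by (simp add: D_def)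
  qed
  then have d_Cons: "d = hd d # tl d" and long: "M \<le> length (tl d)"
    by (cases d; simp)+
  have "tl d \<notin> D" using dmin[of "tl d"] \<open>M < length d\<close> by auto
  moreover have "drop 1 d \<in> \<xi> \<or> drop 1 d \<in> y"
    using d \<xi> y unfolding D_def Omega_iff by blast
  ultimately have tl_mem: "tl d \<in> \<xi>" "tl d \<in> y" by (auto simp: D_def drop_Suc)
  have "d = [hd d] @ tl d" using d_Cons by simp
  then have "d \<in> cone (tl d)" unfolding cone_def by blast
  then have "d \<in> splice (tl d) \<xi> y \<longleftrightarrow> d \<in> y" by (simp add: mem_splice)
  then have "splice (tl d) \<xi> y \<noteq> \<xi>" using d unfolding D_def by blast
  then show ?thesis using that long tl_mem by blast
qed

lemma Omega_perturbation_in_cone: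
  assumes \<xi>: "\<xi> \<in> Omega E00 E01 E1 r s C" and y: "y \<in> Omega E00 E01 E1 r s C"
    and "y \<noteq> \<xi>" and "\<forall>w. length w \<le> M \<longrightarrow> (w \<in> y \<longleftrightarrow> w \<in> \<xi>)"
  obtains \<eta> B where "\<eta> \<in> Omega E00 E01 E1 r s C" "\<eta> \<noteq> \<xi>" "M \<le> length B"
    "(\<eta> - \<xi>) \<union> (\<xi> - \<eta>) \<subseteq> cone B" "(\<eta> - \<xi>) \<union> (\<xi> - \<eta>) \<subseteq> (y - \<xi>) \<union> (\<xi> - y)"
proof -
  obtain B where B: "M \<le> length B" "B \<in> \<xi>" "B \<in> y" "splice B \<xi> y \<noteq> \<xi>"
    using Omega_first_difference[OF assms] .
  have "(splice B \<xi> y - \<xi>) \<union> (\<xi> - splice B \<xi> y) \<subseteq> cone B \<inter> ((y - \<xi>) \<union> (\<xi> - y))"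
    by (auto simp: mem_splice split: if_splits)
  then show ?thesis
    using that[of "splice B \<xi> y" B] splice_in_Omega[OF \<xi> y B(2,3)] B(1,4) by blast
qed

subsection \<open>The topology of pointwise convergence of configurations\<close>

definition membership_topology :: "'a set \<Rightarrow> 'a set set \<Rightarrow> 'a set topology" where
  "membership_topology I X =
     pullback_topology X (\<lambda>\<xi>. restrict (\<lambda>w. w \<in> \<xi>) I)
       (product_topology (\<lambda>_. discrete_topology (UNIV :: bool set)) I)"

definition cylinder :: "'a set set \<Rightarrow> 'a set \<Rightarrow> 'a set \<Rightarrow> 'a set set" where
  "cylinder X F \<xi> = {y \<in> X. \<forall>w\<in>F. w \<in> y \<longleftrightarrow> w \<in> \<xi>}"

lemma Omega_top_eq_membership_topology:
  "Omega_top E00 E01 E1 r s C = membership_topology (free_group E1) (Omega E00 E01 E1 r s C)"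
  by (simp add: Omega_top_def membership_topology_def)

lemma topspace_membership_topology [simp]: "topspace (membership_topology I X) = X"
  by (auto simp: membership_topology_def topspace_pullback_topology)

lemma cylinder_antimono: "F \<subseteq> F' \<Longrightarrow> cylinder X F' \<xi> \<subseteq> cylinder X F \<xi>"
  by (auto simp: cylinder_def)

lemma openin_cylinder:
  assumes "finite F" and "F \<subseteq> I"
  shows "openin (membership_topology I X) (cylinder X F \<xi>)"
proof -
  define f where "f = (\<lambda>\<eta>::'a set. restrict (\<lambda>w. w \<in> \<eta>) I)"
  define Uc where "Uc = (\<lambda>i. if i \<in> F then {i \<in> \<xi>} else (UNIV :: bool set))"
  have "openin (product_topology (\<lambda>_. discrete_topology UNIV) I) (PiE I Uc)"
    unfolding openin_product_topology_alt
  proof (intro ballI exI[of _ Uc] conjI)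
    show "finite {i \<in> I. Uc i \<noteq> topspace (discrete_topology UNIV)}"
      by (rule finite_subset[OF _ assms(1)]) (auto simp: Uc_def)
  qed auto
  moreover have "cylinder X F \<xi> = f -` PiE I Uc \<inter> X"
    using assms(2) by (auto simp: cylinder_def f_def Uc_def PiE_def Pi_def)
  ultimately show ?thesis
    unfolding membership_topology_def openin_pullback_topology f_def by blast
qed

lemma cylinder_subset_open:
  assumes "openin (membership_topology I X) U" and "\<xi> \<in> U"
  obtains F where "finite F" "F \<subseteq> I" "cylinder X F \<xi> \<subseteq> U"
proof -
  define f where "f = (\<lambda>\<eta>::'a set. restrict (\<lambda>w. w \<in> \<eta>) I)"
  obtain W where W: "openin (product_topology (\<lambda>_. discrete_topology (UNIV :: bool set)) I) W"
    "U = f -` W \<inter> X"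
    using assms(1) unfolding membership_topology_def openin_pullback_topology f_def by metis
  then obtain Ub where Ub: "finite {i \<in> I. Ub i \<noteq> UNIV}" "f \<xi> \<in> PiE I Ub" "PiE I Ub \<subseteq> W"
    using assms(2) unfolding openin_product_topology_alt by auto
  have "f y \<in> PiE I Ub" if "y \<in> cylinder X {i \<in> I. Ub i \<noteq> UNIV} \<xi>" for y
  proof -
    have "f y i = f \<xi> i" if "i \<in> I" "Ub i \<noteq> UNIV" for i
      using that \<open>y \<in> cylinder _ _ _\<close> by (simp add: f_def cylinder_def)
    then show ?thesis using Ub(2) by (force simp: PiE_def Pi_def f_def)
  qed
  then have "cylinder X {i \<in> I. Ub i \<noteq> UNIV} \<xi> \<subseteq> U"
    using W(2) Ub(3) by (force simp: cylinder_def)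
  then show ?thesis using that Ub(1) by blast
qed

lemma finite_short_words: "finite E1 \<Longrightarrow> finite {w \<in> free_group E1. length w \<le> M}"
  by (rule finite_subset[OF _ finite_lists_length_le[of "E1 \<times> UNIV" M]])
    (force simp: free_group_def)+

lemma strongly_top_free_at_Omega:
  fixes E00 E01 :: "'v set" and E1 :: "'e set" and r s :: "'e \<Rightarrow> 'v" and C :: "'v \<Rightarrow> 'e set set"
  defines "Om \<equiv> Omega E00 E01 E1 r s C" and "T \<equiv> Omega_top E00 E01 E1 r s C"
    and "dm \<equiv> theta_dom E00 E01 E1 r s C" and "I \<equiv> free_group E1"
  assumes "finite E1" and \<xi>: "\<xi> \<in> Om" and tf: "top_free_at T dm theta I [] \<xi>"
  shows "strongly_top_free_at T dm theta I [] \<xi>"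
  unfolding strongly_top_free_at_def
proof (intro allI impI)
  fix gs U
  assume gs: "finite gs \<and> gs \<subseteq> Stab dm theta I \<xi> \<and> [] \<notin> gs" and U: "openin T U \<and> \<xi> \<in> U"
  show "\<exists>y\<in>U. gs \<inter> Stab dm theta I y = {}"
  proof (cases "gs = {}")
    case False
    then obtain g0 where g0: "g0 \<in> gs" by auto
    have T: "T = membership_topology I Om"
      by (simp add: T_def Om_def I_def Omega_top_eq_membership_topology)
    obtain F0 where F0: "finite F0" "F0 \<subseteq> I" "cylinder Om F0 \<xi> \<subseteq> U"
      using cylinder_subset_open U unfolding T by metis
    define M where "M = Suc (Max (length ` gs))"
    define V where "V = cylinder Om (F0 \<union> {w \<in> I. length w \<le> M}) \<xi>"
    have "openin T V"
      unfolding T V_def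
      by (rule openin_cylinder) (use F0 finite_short_words[OF \<open>finite E1\<close>] in \<open>auto simp: I_def\<close>)
    moreover have "\<xi> \<in> V" using \<xi> by (simp add: V_def cylinder_def)
    moreover have "g0 \<in> Stab dm theta I \<xi>" "g0 \<noteq> []" using g0 gs by auto
    ultimately obtain y where y: "y \<in> V" "g0 \<notin> Stab dm theta I y"
      using tf unfolding top_free_at_def by metis
    have Om_sub: "\<eta> \<subseteq> I" if "\<eta> \<in> Om" for \<eta> using that by (simp add: Om_def I_def Omega_iff)
    have "y \<in> Om" "y \<noteq> \<xi>" using y g0 gs by (auto simp: V_def cylinder_def)
    moreover have "\<forall>w. length w \<le> M \<longrightarrow> (w \<in> y \<longleftrightarrow> w \<in> \<xi>)"
      using y(1) Om_sub[OF \<xi>] Om_sub[OF \<open>y \<in> Om\<close>] by (auto simp: V_def cylinder_def)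
    ultimately obtain \<eta> B where \<eta>: "\<eta> \<in> Om" "\<eta> \<noteq> \<xi>" "M \<le> length B"
      "(\<eta> - \<xi>) \<union> (\<xi> - \<eta>) \<subseteq> cone B" "(\<eta> - \<xi>) \<union> (\<xi> - \<eta>) \<subseteq> (y - \<xi>) \<union> (\<xi> - y)"
      using Omega_perturbation_in_cone \<xi> unfolding Om_def by metis
    have "\<eta> \<in> V" using y(1) \<eta>(1,5) unfolding V_def cylinder_def by blast
    moreover have "g \<notin> Stab dm theta I \<eta>" if g: "g \<in> gs" for g
    proof (rule Stab_theta_disjoint_if_sym_diff_in_cone[OF _ \<eta>(2,4)])
      show "\<forall>w\<in>\<eta> \<union> \<xi>. reduced w"
        using Om_sub[OF \<xi>] Om_sub[OF \<eta>(1)] by (auto simp: I_def free_group_def)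
      show "g \<in> Stab dm theta I \<xi>" "g \<noteq> []" using g gs by auto
      then show "reduced g" by (simp add: Stab_def I_def free_group_def)
      have "length g \<le> Max (length ` gs)" using g gs by (intro Max_ge) auto
      then show "length g < length B" using \<eta>(3) by (simp add: M_def)
    qed
    ultimately show ?thesis using F0(3) cylinder_antimono[of F0] unfolding V_def by blast
  qed (use U in auto)
qed

theorem proposition7:
  fixes E0 E00 E01 :: "'v set" and E1 :: "'e set" and r s :: "'e \<Rightarrow> 'v"
    and C :: "'v \<Rightarrow> 'e set set"
  assumes "finite_bipartite_sep_graph E0 E00 E01 E1 r s C"
  shows "rel_strongly_top_free (Omega_top E00 E01 E1 r s C)
           (theta_dom E00 E01 E1 r s C) theta (free_group E1) []"
proof -
  have "finite E1" using assms by (simp add: finite_bipartite_sep_graph_def)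
  with strongly_top_free_at_Omega show ?thesis
    unfolding rel_strongly_top_free_def TF_points_def
    by (auto simp: Omega_top_eq_membership_topology)
qed

end
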